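(* Let $\kappa$ be a regular uncountable cardinal, $\vec C$ a $C$-sequence over $\kappa$, and let $\rho_0,\rho_2$ be the functions obtained by walking along $\vec C$. Then $T(\rho_0)$ is a special $\kappa$-tree if and only if $T(\rho_2)$ is a special $\kappa$-tree.
   Context: A $C$-sequence over $\kappa$ is $\langle C_\delta\mid\delta<\kappa\rangle$, each $C_\delta$ a closed subset of $\delta$ with $\sup(C_\delta)=\sup(\delta)$. Walks: for $\beta<\gamma<\kappa$, $\mathrm{Tr}(\beta,\gamma)(0)=\gamma$, and $\mathrm{Tr}(\beta,\gamma)(n)=\min(C_{\mathrm{Tr}(\beta,\gamma)(n-1)}\setminus\beta)$ if $\mathrm{Tr}(\beta,\gamma)(n-1)>\beta$, else $\beta$; $\rho_2(\beta,\gamma)$ is the least $l$ with $\mathrm{Tr}(\beta,\gamma)(l)=\beta$; $\rho_0(\beta,\gamma)=\langle\mathrm{otp}(C_{\mathrm{Tr}(\beta,\gamma)(n)}\cap\beta)\mid n<\rho_2(\beta,\gamma)\rangle$. For $c\in\{\rho_0,\rho_2\}$, $T(c)=\{c_\delta\restriction\gamma\mid\gamma\le\delta<\kappa\}$ ordered by $\subseteq$, where $c_\delta(\xi)=c(\xi,\delta)$ for $\xi<\delta$. A $\kappa$-tree is a tree of height $\kappa$ with all levels of size $<\kappa$. A $\kappa$-tree $(T,<_T)$ is special iff there is $f:T\to T$ with $f(x)<_Tx$ for every non-minimal $x$ and each $f^{-1}\{z\}$ covered by fewer than $\kappa$ antichains. *)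

theory Defs
  imports Main "HOL-Library.Countable_Set"
begin

(* kappa is represented by a well-ordered type 'k whose order type is kappa *)
definition regular_uncountable_cardinal :: "'k::wellorder itself \<Rightarrow> bool" where
  "regular_uncountable_cardinal _ \<longleftrightarrow>
     uncountable (UNIV::'k set) \<and>
     (\<forall>\<delta>::'k. (card_of {..<\<delta>}, card_of (UNIV::'k set)) \<in> ordLess) \<and>
     (\<forall>A::'k set. (card_of A, card_of (UNIV::'k set)) \<in> ordLess \<longrightarrow> (\<exists>\<delta>. \<forall>a\<in>A. a < \<delta>))"

definition is_sup :: "'k::wellorder set \<Rightarrow> 'k \<Rightarrow> bool" where
  "is_sup A \<gamma> \<longleftrightarrow> (\<forall>a\<in>A. a \<le> \<gamma>) \<and> (\<forall>\<eta><\<gamma>. \<exists>a\<in>A. \<eta> < a)"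

definition closed_below :: "'k::wellorder set \<Rightarrow> 'k \<Rightarrow> bool" where
  "closed_below D \<delta> \<longleftrightarrow> D \<subseteq> {..<\<delta>} \<and>
     (\<forall>\<gamma><\<delta>. (\<exists>x. x < \<gamma>) \<and> is_sup (D \<inter> {..<\<gamma>}) \<gamma> \<longrightarrow> \<gamma> \<in> D)"

definition C_sequence :: "('k::wellorder \<Rightarrow> 'k set) \<Rightarrow> bool" where
  "C_sequence C \<longleftrightarrow> (\<forall>\<delta>. closed_below (C \<delta>) \<delta> \<and>
      (\<forall>\<gamma>. is_sup (C \<delta>) \<gamma> \<longleftrightarrow> is_sup {..<\<delta>} \<gamma>))"

primrec Tr :: "('k::wellorder \<Rightarrow> 'k set) \<Rightarrow> 'k \<Rightarrow> 'k \<Rightarrow> nat \<Rightarrow> 'k" where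
  "Tr C \<beta> \<gamma> 0 = \<gamma>"
| "Tr C \<beta> \<gamma> (Suc n) =
     (if \<beta> < Tr C \<beta> \<gamma> n then (LEAST x. x \<in> C (Tr C \<beta> \<gamma> n) \<and> \<beta> \<le> x) else \<beta>)"

definition rho2 :: "('k::wellorder \<Rightarrow> 'k set) \<Rightarrow> 'k \<Rightarrow> 'k \<Rightarrow> nat" where
  "rho2 C \<beta> \<gamma> = (LEAST l. Tr C \<beta> \<gamma> l = \<beta>)"

definition otp :: "'k::wellorder set \<Rightarrow> 'k" where
  "otp X = (THE \<gamma>. \<exists>f. bij_betw f {..<\<gamma>} X \<and> strict_mono_on {..<\<gamma>} f)"

definition rho0 :: "('k::wellorder \<Rightarrow> 'k set) \<Rightarrow> 'k \<Rightarrow> 'k \<Rightarrow> 'k list" where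
  "rho0 C \<beta> \<gamma> = map (\<lambda>n. otp (C (Tr C \<beta> \<gamma> n) \<inter> {..<\<beta>})) [0..<rho2 C \<beta> \<gamma>]"

definition fiber_restr :: "('k::wellorder \<Rightarrow> 'k \<Rightarrow> 'v) \<Rightarrow> 'k \<Rightarrow> 'k \<Rightarrow> ('k \<rightharpoonup> 'v)" where
  "fiber_restr c \<delta> \<gamma> = (\<lambda>\<xi>. if \<xi> < \<gamma> then Some (c \<xi> \<delta>) else None)"

definition Tc :: "('k::wellorder \<Rightarrow> 'k \<Rightarrow> 'v) \<Rightarrow> ('k \<rightharpoonup> 'v) set" where
  "Tc c = {fiber_restr c \<delta> \<gamma> | \<gamma> \<delta>. \<gamma> \<le> \<delta>}"

definition Tc_less :: "('k \<rightharpoonup> 'v) \<Rightarrow> ('k \<rightharpoonup> 'v) \<Rightarrow> bool" where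
  "Tc_less s t \<longleftrightarrow> s \<subseteq>\<^sub>m t \<and> s \<noteq> t"

definition height_is :: "'a set \<Rightarrow> ('a \<Rightarrow> 'a \<Rightarrow> bool) \<Rightarrow> 'a \<Rightarrow> 'k::wellorder \<Rightarrow> bool" where
  "height_is T lt x \<alpha> \<longleftrightarrow> (\<exists>f. bij_betw f {..<\<alpha>} {y\<in>T. lt y x} \<and>
      (\<forall>a<\<alpha>. \<forall>b<\<alpha>. a < b \<longleftrightarrow> lt (f a) (f b)))"

definition kappa_tree :: "'k::wellorder itself \<Rightarrow> 'a set \<Rightarrow> ('a \<Rightarrow> 'a \<Rightarrow> bool) \<Rightarrow> bool" where
  "kappa_tree _ T lt \<longleftrightarrow>
     (\<forall>x\<in>T. \<not> lt x x) \<and>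
     (\<forall>x\<in>T. \<forall>y\<in>T. \<forall>z\<in>T. lt x y \<longrightarrow> lt y z \<longrightarrow> lt x z) \<and>
     (\<forall>x\<in>T. \<exists>\<alpha>::'k. height_is T lt x \<alpha>) \<and>
     (\<forall>\<alpha>::'k. {x\<in>T. height_is T lt x \<alpha>} \<noteq> {} \<and>
        (card_of {x\<in>T. height_is T lt x \<alpha>}, card_of (UNIV::'k set)) \<in> ordLess)"

definition antichain_in :: "'a set \<Rightarrow> ('a \<Rightarrow> 'a \<Rightarrow> bool) \<Rightarrow> 'a set \<Rightarrow> bool" where
  "antichain_in T lt A \<longleftrightarrow> A \<subseteq> T \<and> (\<forall>x\<in>A. \<forall>y\<in>A. \<not> lt x y)"

definition special_kappa_tree :: "'k::wellorder itself \<Rightarrow> 'a set \<Rightarrow> ('a \<Rightarrow> 'a \<Rightarrow> bool) \<Rightarrow> bool" where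
  "special_kappa_tree K T lt \<longleftrightarrow> kappa_tree K T lt \<and>
     (\<exists>f. (\<forall>x\<in>T. f x \<in> T) \<and>
          (\<forall>x\<in>T. (\<exists>y\<in>T. lt y x) \<longrightarrow> lt (f x) x) \<and>
          (\<forall>z\<in>T. \<exists>\<A>. (card_of \<A>, card_of (UNIV::'k set)) \<in> ordLess \<and>
                 (\<forall>A\<in>\<A>. antichain_in T lt A) \<and> {x\<in>T. f x = z} \<subseteq> \<Union>\<A>))"

end

theory Submission
  imports Defs
begin

text \<open>Since \<open>\<rho>\<^sub>2(\<xi>, \<delta>)\<close> is the length of \<open>\<rho>\<^sub>0(\<xi>, \<delta>)\<close>, taking lengths maps \<open>T(\<rho>\<^sub>0)\<close> onto
  \<open>T(\<rho>\<^sub>2)\<close> level by level and preserves the tree order, so a specializing map of \<open>T(\<rho>\<^sub>2)\<close>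
  pulls back to \<open>T(\<rho>\<^sub>0)\<close> once the levels of \<open>T(\<rho>\<^sub>0)\<close> are known to be small.

  Everything else rests on one observation: for \<open>0 < \<gamma> \<le> \<delta>\<close> there is \<open>\<epsilon> < \<gamma>\<close> such that
  \<open>\<rho>\<^sub>0(\<cdot>, \<delta>)\<restriction>\<gamma>\<close> is determined by \<open>\<rho>\<^sub>2(\<cdot>, \<delta>)\<restriction>\<gamma>\<close> together with \<open>\<rho>\<^sub>0(\<cdot>, \<delta>)\<restriction>(\<epsilon> + 1)\<close>.
  The walk from \<open>\<delta>\<close> to \<open>\<xi> < \<gamma>\<close> follows the walk from \<open>\<delta>\<close> to \<open>\<gamma>\<close> until some \<open>C\<^sub>\<alpha>\<close> on the
  latter meets \<open>[\<xi>, \<gamma>)\<close>. Along the common part, whether \<open>\<eta> \<in> [\<xi>, \<gamma>)\<close> lies in \<open>C\<^sub>\<alpha>\<close> is read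
  off \<open>\<rho>\<^sub>2(\<eta>, \<delta>)\<close>, while \<open>C\<^sub>\<alpha> \<inter> \<zeta>\<close>, for the least \<open>\<zeta>\<close> still following at that step, is
  recorded in \<open>\<rho>\<^sub>0(\<zeta>, \<delta>)\<close>; \<open>\<epsilon>\<close> bounds these finitely many \<open>\<zeta>\<close>. So a node of \<open>T(\<rho>\<^sub>0)\<close> is
  coded by its image in \<open>T(\<rho>\<^sub>2)\<close>, a node of lower level and a finite sequence of ordinals: by
  induction the levels of \<open>T(\<rho>\<^sub>0)\<close> are small, and a specializing map of \<open>T(\<rho>\<^sub>0)\<close> induces one
  of \<open>T(\<rho>\<^sub>2)\<close> whose fibres split into few antichains according to the code.\<close>

unbundle cardinal_syntax

section \<open>Sets of size less than \<kappa>\<close>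

definition kappa_small :: "'k::wellorder itself \<Rightarrow> 'a set \<Rightarrow> bool" where
  "kappa_small K A \<longleftrightarrow> |A| <o |UNIV::'k set|"

lemma kappa_small_subset: "kappa_small K B \<Longrightarrow> A \<subseteq> B \<Longrightarrow> kappa_small K A"
  unfolding kappa_small_def using card_of_mono1 ordLeq_ordLess_trans by blast

lemma kappa_small_image: "kappa_small K A \<Longrightarrow> kappa_small K (f ` A)"
  unfolding kappa_small_def using card_of_image ordLeq_ordLess_trans by blast

lemma kappa_small_inj_on: "kappa_small K B \<Longrightarrow> inj_on f A \<Longrightarrow> f ` A \<subseteq> B \<Longrightarrow> kappa_small K A"
  unfolding kappa_small_def using card_of_ordLeq[of A B] ordLeq_ordLess_trans by blast

context
  fixes K :: "'k::wellorder itself"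
  assumes regular: "regular_uncountable_cardinal K"
begin

lemma kappa_small_bounded: "kappa_small K (A::'k set) \<Longrightarrow> \<exists>d. \<forall>a\<in>A. a < d"
  using regular unfolding regular_uncountable_cardinal_def kappa_small_def by blast

lemma kappa_small_lessThan: "kappa_small K {..<(d::'k)}"
  using regular unfolding regular_uncountable_cardinal_def kappa_small_def by blast

lemma kappa_small_countable: "countable A \<Longrightarrow> kappa_small K A"
proof -
  assume A: "countable A"
  have "countable (UNIV::'k set)" if f: "inj_on f (UNIV::'k set)" "f ` UNIV \<subseteq> A" for f
    using countable_image_inj_on[OF countable_subset[OF f(2) A] f(1)] .
  then have "\<not> (\<exists>f. inj_on f (UNIV::'k set) \<and> f ` UNIV \<subseteq> A)"
    using regular unfolding regular_uncountable_cardinal_def by blast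
  then show ?thesis unfolding kappa_small_def using card_of_ordLess by blast
qed

lemma stable_kappa: "stable |UNIV::'k set|"
  unfolding stable_def
proof (intro allI impI)
  fix A :: "'k set" and F :: "'k \<Rightarrow> 'k set"
  assume small: "|A| <o |UNIV::'k set| \<and> (\<forall>a\<in>A. |F a| <o |UNIV::'k set| )"
  obtain \<alpha> where \<alpha>: "\<forall>a\<in>A. a < \<alpha>"
    using small kappa_small_bounded unfolding kappa_small_def by blast
  have "\<forall>a\<in>A. \<exists>\<beta>. \<forall>x\<in>F a. x < \<beta>"
    using small kappa_small_bounded unfolding kappa_small_def by blast
  then obtain b where b: "\<forall>a\<in>A. \<forall>x\<in>F a. x < b a" by metis
  obtain \<beta> where \<beta>: "\<forall>a\<in>A. b a < \<beta>"
    using small kappa_small_bounded kappa_small_image[of K A b] unfolding kappa_small_def by blast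
  define \<mu> where "\<mu> = max \<alpha> \<beta>"
  have "Sigma A F \<subseteq> {..<\<mu>} \<times> {..<\<mu>}"
    using \<alpha> b \<beta> unfolding \<mu>_def by (auto simp: less_max_iff_disj) (meson less_trans)
  moreover have "kappa_small K ({..<\<mu>} \<times> {..<\<mu>})"
  proof (cases "finite {..<\<mu>}")
    case True
    then show ?thesis by (simp add: kappa_small_countable countable_finite)
  next
    case False
    then have "|{..<\<mu>} \<times> {..<\<mu>}| =o |{..<\<mu>}|" by (rule card_of_Times_same_infinite)
    then show ?thesis
      using kappa_small_lessThan unfolding kappa_small_def using ordIso_ordLess_trans by blast
  qed
  ultimately show "|Sigma A F| <o |UNIV::'k set|"
    using kappa_small_subset unfolding kappa_small_def by blast
qed

lemma kappa_small_UN: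
  "kappa_small K I \<Longrightarrow> (\<And>i. i \<in> I \<Longrightarrow> kappa_small K (A i)) \<Longrightarrow> kappa_small K (\<Union>i\<in>I. A i)"
  using card_of_UNION_ordLess_infinite_Field[OF stable_kappa card_of_Card_order]
  unfolding kappa_small_def by blast

lemma kappa_small_Sigma:
  "kappa_small K I \<Longrightarrow> (\<And>i. i \<in> I \<Longrightarrow> kappa_small K (A i)) \<Longrightarrow> kappa_small K (Sigma I A)"
  using stable_elim[OF stable_kappa] unfolding kappa_small_def by blast

lemma kappa_small_Times: "kappa_small K A \<Longrightarrow> kappa_small K B \<Longrightarrow> kappa_small K (A \<times> B)"
  using kappa_small_Sigma[of A "\<lambda>_. B"] by blast

lemma kappa_small_insert:
  assumes "kappa_small K A"
  shows "kappa_small K (insert x A)"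
proof -
  have "kappa_small K (\<Union>B\<in>{A, {x}}. B)"
    by (rule kappa_small_UN) (use assms in \<open>auto intro: kappa_small_countable\<close>)
  then show ?thesis by simp
qed

lemma kappa_small_atMost: "kappa_small K {..(d::'k)}"
proof -
  have "{..d} = insert d {..<d}" by auto
  then show ?thesis using kappa_small_insert[OF kappa_small_lessThan] by simp
qed

lemma kappa_small_lists: "kappa_small K A \<Longrightarrow> kappa_small K (lists A)"
proof -
  assume A: "kappa_small K A"
  have len: "kappa_small K {xs \<in> lists A. length xs = n}" for n
  proof (induction n)
    case 0
    have "{xs \<in> lists A. length xs = 0} \<subseteq> {[]}" by auto
    then have "countable {xs \<in> lists A. length xs = 0}" by (rule countable_subset) simp
    then show ?case by (rule kappa_small_countable)
  next
    case (Suc n)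
    have "{xs \<in> lists A. length xs = Suc n} \<subseteq> (\<lambda>(a, xs). a # xs) ` (A \<times> {xs \<in> lists A. length xs = n})"
      by (auto simp: length_Suc_conv)
    then show ?case by (rule kappa_small_subset[OF kappa_small_image[OF kappa_small_Times[OF A Suc.IH]]])
  qed
  have "kappa_small K (UNIV::nat set)" by (rule kappa_small_countable) simp
  then have "kappa_small K (\<Union>n. {xs \<in> lists A. length xs = n})" using len by (rule kappa_small_UN)
  moreover have "lists A \<subseteq> (\<Union>n. {xs \<in> lists A. length xs = n})" by blast
  ultimately show ?thesis by (rule kappa_small_subset)
qed

end

section \<open>Order types\<close>

lemma strict_mono_on_ge_self:
  fixes f :: "'k::wellorder \<Rightarrow> 'k"
  assumes "strict_mono_on D f" "\<And>y z. z \<in> D \<Longrightarrow> y \<le> z \<Longrightarrow> y \<in> D" "x \<in> D"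
  shows "x \<le> f x"
  using assms(3)
proof (induction x rule: less_induct)
  case (less x)
  show ?case
  proof (rule ccontr)
    assume "\<not> x \<le> f x"
    then have lt: "f x < x" by simp
    then have fx: "f x \<in> D" using assms(2) less.prems by auto
    have "f (f x) < f x" using strict_mono_onD[OF assms(1) fx less.prems lt] .
    moreover have "f x \<le> f (f x)" using less.IH[OF lt fx] .
    ultimately show False by simp
  qed
qed

lemma strict_mono_on_inv_into:
  fixes f :: "'a::linorder \<Rightarrow> 'b::linorder"
  assumes "bij_betw f A B" "strict_mono_on A f"
  shows "strict_mono_on B (inv_into A f)"
proof (rule strict_mono_onI)
  fix y y' assume y: "y \<in> B" "y' \<in> B" "y < y'"
  let ?g = "inv_into A f"
  have g: "?g y \<in> A" "?g y' \<in> A" "f (?g y) = y" "f (?g y') = y'"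
    using y assms(1) by (auto simp: bij_betw_def inv_into_into f_inv_into_f)
  show "?g y < ?g y'"
  proof (rule ccontr)
    assume "\<not> ?g y < ?g y'"
    then have "?g y' < ?g y \<or> ?g y' = ?g y" by auto
    then have "y' \<le> y" using strict_mono_onD[OF assms(2) g(2,1)] g(3,4) by fastforce
    then show False using y(3) by simp
  qed
qed

lemma lessThan_iso_eq:
  fixes f :: "'k::wellorder \<Rightarrow> 'k"
  assumes "bij_betw f {..<a} {..<b}" "strict_mono_on {..<a} f"
  shows "a = b"
proof (rule linorder_cases[of a b])
  assume ab: "a < b"
  let ?g = "inv_into {..<a} f"
  have "a \<le> ?g a"
    by (rule strict_mono_on_ge_self[OF strict_mono_on_inv_into[OF assms]]) (use ab in auto)
  moreover have "?g a \<in> {..<a}"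
    using ab assms(1) by (intro inv_into_into) (auto simp: bij_betw_def)
  ultimately show ?thesis by simp
next
  assume ba: "b < a"
  have "b \<le> f b" by (rule strict_mono_on_ge_self[OF assms(2)]) (use ba in auto)
  moreover have "f b < b" using ba assms(1) by (auto simp: bij_betw_def)
  ultimately show ?thesis by simp
qed

lemma otp_eqI:
  fixes f :: "'k::wellorder \<Rightarrow> 'k"
  assumes f: "bij_betw f {..<\<gamma>} X" "strict_mono_on {..<\<gamma>} f"
  shows "otp X = \<gamma>"
  unfolding otp_def
proof (rule the_equality)
  show "\<exists>f. bij_betw f {..<\<gamma>} X \<and> strict_mono_on {..<\<gamma>} f" using f by blast
next
  fix \<delta> :: 'k assume "\<exists>g. bij_betw g {..<\<delta>} X \<and> strict_mono_on {..<\<delta>} g"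
  then obtain g where g: "bij_betw g {..<\<delta>} X" "strict_mono_on {..<\<delta>} g" by blast
  let ?h = "inv_into {..<\<gamma>} f \<circ> g"
  have "bij_betw ?h {..<\<delta>} {..<\<gamma>}"
    using g(1) bij_betw_inv_into[OF f(1)] bij_betw_trans by blast
  moreover have "strict_mono_on {..<\<delta>} ?h"
    using monotone_on_o[OF strict_mono_on_inv_into[OF f] g(2)] g(1) by (auto simp: bij_betw_def)
  ultimately show "\<delta> = \<gamma>" by (rule lessThan_iso_eq)
qed

lemma otp_cong:
  fixes h :: "'k::wellorder \<Rightarrow> 'k"
  assumes h: "bij_betw h A B" "strict_mono_on A h"
  shows "otp A = otp B"
proof -
  have "(\<exists>f. bij_betw f {..<\<gamma>} A \<and> strict_mono_on {..<\<gamma>} f) \<longleftrightarrow>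
        (\<exists>f. bij_betw f {..<\<gamma>} B \<and> strict_mono_on {..<\<gamma>} f)" for \<gamma> :: 'k
  proof
    assume "\<exists>f. bij_betw f {..<\<gamma>} A \<and> strict_mono_on {..<\<gamma>} f"
    then obtain f where f: "bij_betw f {..<\<gamma>} A" "strict_mono_on {..<\<gamma>} f" by blast
    have "bij_betw (h \<circ> f) {..<\<gamma>} B" using f(1) h(1) bij_betw_trans by blast
    moreover have "strict_mono_on {..<\<gamma>} (h \<circ> f)"
      using monotone_on_o[OF h(2) f(2)] f(1) by (auto simp: bij_betw_def)
    ultimately show "\<exists>f. bij_betw f {..<\<gamma>} B \<and> strict_mono_on {..<\<gamma>} f" by blast
  next
    assume "\<exists>f. bij_betw f {..<\<gamma>} B \<and> strict_mono_on {..<\<gamma>} f"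
    then obtain f where f: "bij_betw f {..<\<gamma>} B" "strict_mono_on {..<\<gamma>} f" by blast
    have "bij_betw (inv_into A h \<circ> f) {..<\<gamma>} A"
      using f(1) bij_betw_inv_into[OF h(1)] bij_betw_trans by blast
    moreover have "strict_mono_on {..<\<gamma>} (inv_into A h \<circ> f)"
      using monotone_on_o[OF strict_mono_on_inv_into[OF h] f(2)] f(1) by (auto simp: bij_betw_def)
    ultimately show "\<exists>f. bij_betw f {..<\<gamma>} A \<and> strict_mono_on {..<\<gamma>} f" by blast
  qed
  then have "(\<lambda>\<gamma>::'k. \<exists>f. bij_betw f {..<\<gamma>} A \<and> strict_mono_on {..<\<gamma>} f) =
      (\<lambda>\<gamma>::'k. \<exists>f. bij_betw f {..<\<gamma>} B \<and> strict_mono_on {..<\<gamma>} f)" by (rule ext)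
  then show ?thesis unfolding otp_def by (rule arg_cong)
qed

definition ord_enum :: "'k::wellorder set \<Rightarrow> 'k \<Rightarrow> 'k" where
  "ord_enum X = wfrec {(x, y). x < y} (\<lambda>e a. LEAST x. x \<in> X \<and> (\<forall>a'<a. e a' < x))"

lemma ord_enum_eq: "ord_enum X a = (LEAST x. x \<in> X \<and> (\<forall>a'<a. ord_enum X a' < x))"
  unfolding ord_enum_def by (subst wfrec[OF wellorder_class.wf]) (simp add: cut_def)

lemma ord_enum_in:
  assumes "\<exists>x\<in>X. \<forall>a'<a. ord_enum X a' < x"
  shows "ord_enum X a \<in> X \<and> (\<forall>a'<a. ord_enum X a' < ord_enum X a)"
  unfolding ord_enum_eq[of X a] by (rule LeastI_ex) (use assms in blast)

lemma ord_enum_below: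
  assumes "x \<in> X" "x \<notin> ord_enum X ` {..<\<gamma>}"
  shows "a < \<gamma> \<Longrightarrow> ord_enum X a < x"
proof (induction a rule: less_induct)
  case (less a)
  have "ord_enum X a \<le> x"
    unfolding ord_enum_eq[of X a] by (rule Least_le) (use assms(1) less in auto)
  moreover have "ord_enum X a \<noteq> x" using assms(2) less.prems by auto
  ultimately show ?case by simp
qed

lemma ord_enum_iso:
  fixes X :: "'k::wellorder set"
  assumes X: "X \<subseteq> {..<b}"
  shows "\<exists>\<gamma>\<le>b. bij_betw (ord_enum X) {..<\<gamma>} X \<and> strict_mono_on {..<\<gamma>} (ord_enum X)"
proof -
  define G where "G a \<longleftrightarrow> (\<exists>x\<in>X. \<forall>a'<a. ord_enum X a' < x)" for a
  have G_down: "G a'" if "G a" "a' \<le> a" for a a'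
    using that order_less_le_trans unfolding G_def by blast
  have mono: "strict_mono_on D (ord_enum X)" if "\<forall>a\<in>D. G a" for D
  proof (rule strict_mono_onI)
    fix a a' assume "a \<in> D" "a' \<in> D" "a < a'"
    then have "G a'" using that by blast
    then have "\<forall>a''<a'. ord_enum X a'' < ord_enum X a'" using ord_enum_in unfolding G_def by blast
    then show "ord_enum X a < ord_enum X a'" using \<open>a < a'\<close> by blast
  qed
  have "\<not> G b"
  proof
    assume Gb: "G b"
    then have "\<forall>a\<in>{..b}. G a" using G_down by blast
    then have "strict_mono_on {..b} (ord_enum X)" by (rule mono)
    then have "b \<le> ord_enum X b" by (rule strict_mono_on_ge_self) (auto dest: order_trans)
    moreover have "ord_enum X b < b" using ord_enum_in Gb X unfolding G_def by blast
    ultimately show False by simp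
  qed
  define \<gamma> where "\<gamma> = (LEAST a. \<not> G a)"
  have "\<gamma> \<le> b" unfolding \<gamma>_def using \<open>\<not> G b\<close> by (rule Least_le)
  have not_G: "\<not> G \<gamma>" unfolding \<gamma>_def using \<open>\<not> G b\<close> by (rule LeastI)
  have below: "\<forall>a\<in>{..<\<gamma>}. G a" unfolding \<gamma>_def using not_less_Least by blast
  have into: "ord_enum X ` {..<\<gamma>} \<subseteq> X" using below ord_enum_in unfolding G_def by blast
  have onto: "X \<subseteq> ord_enum X ` {..<\<gamma>}"
  proof
    fix x assume "x \<in> X"
    show "x \<in> ord_enum X ` {..<\<gamma>}"
    proof (rule ccontr)
      assume "x \<notin> ord_enum X ` {..<\<gamma>}"
      then have "\<forall>a<\<gamma>. ord_enum X a < x" using ord_enum_below[OF \<open>x \<in> X\<close>] by blast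
      then have "G \<gamma>" using \<open>x \<in> X\<close> unfolding G_def by blast
      then show False using not_G by blast
    qed
  qed
  have "bij_betw (ord_enum X) {..<\<gamma>} X"
    using strict_mono_on_imp_inj_on[OF mono[OF below]] into onto by (auto simp: bij_betw_def)
  then show ?thesis using \<open>\<gamma> \<le> b\<close> mono[OF below] by blast
qed

lemma otp_iso:
  fixes X :: "'k::wellorder set"
  assumes "X \<subseteq> {..<b}"
  shows "bij_betw (ord_enum X) {..<otp X} X \<and> strict_mono_on {..<otp X} (ord_enum X) \<and> otp X \<le> b"
proof -
  obtain \<gamma> where "\<gamma> \<le> b" "bij_betw (ord_enum X) {..<\<gamma>} X" "strict_mono_on {..<\<gamma>} (ord_enum X)"
    using ord_enum_iso[OF assms] by blast
  moreover from calculation have "otp X = \<gamma>" by (intro otp_eqI)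
  ultimately show ?thesis by simp
qed

lemma strict_mono_on_extend_above:
  fixes k :: "'k::linorder \<Rightarrow> 'k"
  assumes k: "strict_mono_on X k" "k ` X \<subseteq> {..<z}" and X: "X \<subseteq> {..<z}" and Y: "\<forall>y\<in>Y. z \<le> y"
  shows "strict_mono_on (X \<union> Y) (\<lambda>x. if x \<in> Y then x else k x)"
proof (rule strict_mono_onI)
  fix x y assume xy: "x \<in> X \<union> Y" "y \<in> X \<union> Y" "x < y"
  have XY: "X \<inter> Y = {}" using X Y by fastforce
  have "y \<notin> X" if "x \<in> Y" using that xy(3) X Y by fastforce
  then consider "x \<in> Y" "y \<in> Y" | "x \<in> X" "y \<in> Y" | "x \<in> X" "y \<in> X"
    using xy(1,2) by blast
  then show "(if x \<in> Y then x else k x) < (if y \<in> Y then y else k y)"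
  proof cases
    case 1
    then show ?thesis using xy by simp
  next
    case 2
    then have "k x < z" "z \<le> y" using k(2) Y by auto
    then show ?thesis using 2 XY by auto
  next
    case 3
    then show ?thesis using strict_mono_onD[OF k(1) _ _ xy(3)] XY by auto
  qed
qed

lemma otp_Un_above:
  fixes X X' Y :: "'k::wellorder set"
  assumes "X \<subseteq> {..<z}" "X' \<subseteq> {..<z}" "\<forall>y\<in>Y. z \<le> y" "otp X = otp X'"
  shows "otp (X \<union> Y) = otp (X' \<union> Y)"
proof -
  let ?a = "otp X"
  have e: "bij_betw (ord_enum X) {..<?a} X" "strict_mono_on {..<?a} (ord_enum X)"
    using otp_iso[OF assms(1)] by auto
  have e': "bij_betw (ord_enum X') {..<?a} X'" "strict_mono_on {..<?a} (ord_enum X')"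
    using otp_iso[OF assms(2)] assms(4) by auto
  let ?k = "ord_enum X' \<circ> inv_into {..<?a} (ord_enum X)"
  have k: "bij_betw ?k X X'" using bij_betw_inv_into[OF e(1)] e'(1) bij_betw_trans by blast
  have k_mono: "strict_mono_on X ?k"
    using monotone_on_o[OF e'(2) strict_mono_on_inv_into[OF e]] bij_betw_inv_into[OF e(1)]
    by (auto simp: bij_betw_def)
  define h where "h x = (if x \<in> Y then x else ?k x)" for x
  have XY: "X \<inter> Y = {}" "X' \<inter> Y = {}" using assms(1-3) by fastforce+
  have "bij_betw h X X'" using k XY(1) by (subst bij_betw_cong[of _ _ ?k]) (auto simp: h_def)
  moreover have "bij_betw h Y Y" by (subst bij_betw_cong[of _ _ id]) (auto simp: h_def)
  ultimately have "bij_betw h (X \<union> Y) (X' \<union> Y)" using XY(2) by (rule bij_betw_combine)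
  moreover have "?k ` X \<subseteq> {..<z}" using k assms(2) by (simp add: bij_betw_def)
  then have "strict_mono_on (X \<union> Y) h"
    unfolding h_def by (rule strict_mono_on_extend_above[OF k_mono _ assms(1,3)])

  ultimately show ?thesis by (rule otp_cong)
qed

section \<open>Walks along a C-sequence\<close>

definition ord_zero :: "'k::wellorder" where
  "ord_zero = (LEAST x. True)"

lemma ord_zero_le [simp]: "ord_zero \<le> x"
  unfolding ord_zero_def by (simp add: Least_le)

lemma not_less_ord_zero [simp]: "\<not> x < ord_zero"
  using ord_zero_le not_le by blast

lemma ord_zero_less_iff: "ord_zero < x \<longleftrightarrow> x \<noteq> ord_zero"
  using ord_zero_le[of x] by (auto simp: order_le_less)

lemma closed_below_reaches_sup:
  assumes "closed_below D t" "is_sup D s" "ord_zero < b" "b \<le> s" "b < t"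
  shows "\<exists>x\<in>D. b \<le> x"
proof (cases "b < s")
  case True
  then show ?thesis using assms(2) unfolding is_sup_def by (blast intro: less_imp_le)
next
  case False
  show ?thesis
  proof (rule ccontr)
    assume "\<not> (\<exists>x\<in>D. b \<le> x)"
    moreover have s: "s = b" using False assms(4) by simp
    ultimately have "D \<inter> {..<s} = D" by (auto simp: not_le)
    then have "(\<exists>x. x < s) \<and> is_sup (D \<inter> {..<s}) s" using assms(2,3) s by auto
    then have "s \<in> D" using assms(1,5) s unfolding closed_below_def by blast
    then show False using \<open>\<not> (\<exists>x\<in>D. b \<le> x)\<close> assms(4) by blast
  qed
qed

text \<open>The hypothesis \<open>ord_zero < b\<close> cannot be dropped: a C-sequence may assign the empty set to
  the successor of \<open>ord_zero\<close>, so walks down to \<open>ord_zero\<close> may take junk steps.\<close>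

lemma C_sequence_reaches:
  assumes C: "C_sequence C" and "ord_zero < b" "b < t"
  shows "\<exists>x\<in>C t. b \<le> x"
proof -
  obtain s where s: "is_sup {..<t} s" "b \<le> s"
  proof (cases "\<exists>e<t. \<forall>a<t. \<not> e < a")
    case True
    then obtain e where "e < t" "\<forall>a<t. \<not> e < a" by blast
    then show ?thesis using that[of e] assms(3) unfolding is_sup_def by (auto simp: not_less)
  next
    case False
    have "is_sup {..<t} t" unfolding is_sup_def
    proof (intro conjI ballI allI impI)
      fix \<eta> assume "\<eta> < t"
      then show "\<exists>x\<in>{..<t}. \<eta> < x" using False by auto
    qed simp
    then show ?thesis using that[of t] assms(3) by (simp add: less_imp_le)
  qed
  have "is_sup (C t) s" "closed_below (C t) t" using C s(1) unfolding C_sequence_def by blast+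
  then show ?thesis using closed_below_reaches_sup assms(2,3) s(2) by blast
qed

lemma C_sequence_subset: "C_sequence C \<Longrightarrow> C t \<subseteq> {..<t}"
  unfolding C_sequence_def closed_below_def by blast

lemma Tr_add_cong: "Tr C b g n = Tr C b g' n' \<Longrightarrow> Tr C b g (n + p) = Tr C b g' (n' + p)"
  by (induction p) auto

context
  fixes C :: "'k::wellorder \<Rightarrow> 'k set"
  assumes C: "C_sequence C"
begin

lemma Tr_step:
  assumes "ord_zero < b" "b < Tr C b g n"
  shows "Tr C b g (Suc n) \<in> C (Tr C b g n)" "b \<le> Tr C b g (Suc n)" "Tr C b g (Suc n) < Tr C b g n"
    "\<And>x. x \<in> C (Tr C b g n) \<Longrightarrow> b \<le> x \<Longrightarrow> Tr C b g (Suc n) \<le> x"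
proof -
  obtain x where "x \<in> C (Tr C b g n)" "b \<le> x" using C_sequence_reaches[OF C assms] by blast
  then have least: "(LEAST x. x \<in> C (Tr C b g n) \<and> b \<le> x) \<in> C (Tr C b g n) \<and>
      b \<le> (LEAST x. x \<in> C (Tr C b g n) \<and> b \<le> x)"
    by (intro LeastI[of "\<lambda>x. x \<in> C (Tr C b g n) \<and> b \<le> x"]) blast
  have Suc: "Tr C b g (Suc n) = (LEAST x. x \<in> C (Tr C b g n) \<and> b \<le> x)" using assms(2) by simp
  show "Tr C b g (Suc n) \<in> C (Tr C b g n)" "b \<le> Tr C b g (Suc n)" using least Suc by simp_all
  then show "Tr C b g (Suc n) < Tr C b g n" using C_sequence_subset[OF C] by blast
  show "Tr C b g (Suc n) \<le> x" if "x \<in> C (Tr C b g n)" "b \<le> x" for x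
    unfolding Suc using that by (blast intro: Least_le)
qed

lemma Tr_ge: "b \<le> g \<Longrightarrow> b \<le> Tr C b g n"
proof (induction n)
  case 0
  then show ?case by simp
next
  case (Suc n)
  show ?case
  proof (cases "ord_zero < b \<and> b < Tr C b g n")
    case True
    then show ?thesis using Tr_step(2) by blast
  next
    case False
    then show ?thesis by (auto simp: ord_zero_less_iff)
  qed
qed

lemma Tr_reaches:
  assumes "ord_zero < b" "b \<le> g"
  shows "\<exists>n. Tr C b g n = b"
proof (rule ccontr)
  assume never: "\<not> (\<exists>n. Tr C b g n = b)"
  have "(LEAST t. t \<in> range (Tr C b g)) \<in> range (Tr C b g)" by (rule LeastI) blast
  then obtain n where min: "Tr C b g n = (LEAST t. t \<in> range (Tr C b g))" by auto
  have "b < Tr C b g n" using Tr_ge[OF assms(2), of n] never by (metis order_le_less)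
  then have "Tr C b g (Suc n) < Tr C b g n" using Tr_step(3) assms(1) by blast
  moreover have "Tr C b g n \<le> Tr C b g (Suc n)" unfolding min by (rule Least_le) blast
  ultimately show False by simp
qed

lemma Tr_rho2: "ord_zero < b \<Longrightarrow> b \<le> g \<Longrightarrow> Tr C b g (rho2 C b g) = b"
  using Tr_reaches unfolding rho2_def by (rule LeastI_ex)

end

lemma rho2_le: "Tr C b g n = b \<Longrightarrow> rho2 C b g \<le> n"
  unfolding rho2_def by (rule Least_le)

section \<open>Recovering \<open>\<rho>\<^sub>0\<close> from \<open>\<rho>\<^sub>2\<close>\<close>

text \<open>For \<open>x \<in> walk_followers C g d j\<close> the walks from \<open>d\<close> to \<open>x\<close> and to \<open>g\<close> share their first \<open>j\<close>
  steps.\<close>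

primrec walk_followers :: "('k::wellorder \<Rightarrow> 'k set) \<Rightarrow> 'k \<Rightarrow> 'k \<Rightarrow> nat \<Rightarrow> 'k set" where
  "walk_followers C g d 0 = {x. ord_zero < x \<and> x < g}"
| "walk_followers C g d (Suc j) =
     {x \<in> walk_followers C g d j. \<forall>y\<in>C (Tr C g d j). y < x \<or> g \<le> y}"

lemma walk_followers_bounds: "x \<in> walk_followers C g d j \<Longrightarrow> ord_zero < x \<and> x < g"
  by (induction j) auto

lemma walk_followers_antimono: "i \<le> j \<Longrightarrow> walk_followers C g d j \<subseteq> walk_followers C g d i"
  by (induction j) (auto simp: le_Suc_eq)

lemma walk_followers_upward:
  "x \<in> walk_followers C g d j \<Longrightarrow> x \<le> x' \<Longrightarrow> x' < g \<Longrightarrow> x' \<in> walk_followers C g d j"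
  by (induction j) (auto dest: order_less_le_trans)

context
  fixes C :: "'k::wellorder \<Rightarrow> 'k set" and g d :: 'k
  assumes C: "C_sequence C" and gd: "g \<le> d"
begin

lemma less_Tr_if_follower: "x \<in> walk_followers C g d (Suc j) \<Longrightarrow> g < Tr C g d j"
proof (rule ccontr)
  assume x: "x \<in> walk_followers C g d (Suc j)" and "\<not> g < Tr C g d j"
  then have "Tr C g d j = g" using Tr_ge[OF C gd, of j] by simp
  moreover have "ord_zero < x" "x < g" using walk_followers_bounds[OF x] by auto
  then obtain y where "y \<in> C g" "x \<le> y" using C_sequence_reaches[OF C] by blast
  moreover have "y < g" using calculation C_sequence_subset[OF C] by blast
  ultimately show False using x by (auto simp: not_less)
qed

lemma Tr_follower: "x \<in> walk_followers C g d j \<Longrightarrow> m \<le> j \<Longrightarrow> Tr C x d m = Tr C g d m"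
proof (induction j arbitrary: m)
  case 0
  then show ?case by simp
next
  case (Suc j)
  have x: "x \<in> walk_followers C g d j" using Suc.prems(1) by simp
  show ?case
  proof (cases "m \<le> j")
    case True
    then show ?thesis using Suc.IH x by blast
  next
    case False
    then have m: "m = Suc j" using Suc.prems(2) by simp
    have same: "Tr C x d j = Tr C g d j" using Suc.IH x by blast
    have "g < Tr C g d j" using less_Tr_if_follower Suc.prems(1) by blast
    moreover have "x < g" using walk_followers_bounds[OF x] by blast
    ultimately have "x < Tr C x d j" using same by simp
    moreover have "(\<lambda>y. y \<in> C (Tr C g d j) \<and> x \<le> y) = (\<lambda>y. y \<in> C (Tr C g d j) \<and> g \<le> y)"
      using Suc.prems(1) \<open>x < g\<close> by (auto intro!: ext simp: not_less dest: order_less_le_trans)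
    ultimately show ?thesis using m same \<open>g < Tr C g d j\<close> by simp
  qed
qed

lemma less_Tr_follower: "x \<in> walk_followers C g d j \<Longrightarrow> m \<le> j \<Longrightarrow> x < Tr C x d m"
  using Tr_follower[of x j m] Tr_ge[OF C gd, of m] walk_followers_bounds[of x C g d j] by auto

lemma less_rho2_follower: "x \<in> walk_followers C g d j \<Longrightarrow> j < rho2 C x d"
proof (rule ccontr)
  assume x: "x \<in> walk_followers C g d j" and "\<not> j < rho2 C x d"
  then have "x < Tr C x d (rho2 C x d)" using less_Tr_follower by simp
  moreover have "ord_zero < x" "x \<le> d" using walk_followers_bounds[OF x] gd by auto
  ultimately show False using Tr_rho2[OF C] by simp
qed

lemma follower_mem_C_Tr_iff:
  assumes x: "x \<in> walk_followers C g d j"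
  shows "x \<in> C (Tr C g d j) \<longleftrightarrow> rho2 C x d = Suc j"
proof -
  have x0: "ord_zero < x" "x \<le> d" using walk_followers_bounds[OF x] gd by auto
  have same: "Tr C x d j = Tr C g d j" using Tr_follower[OF x] by simp
  have below: "x < Tr C x d j" using less_Tr_follower[OF x] by simp
  note step = Tr_step[OF C x0(1) below]
  show ?thesis
  proof
    assume "x \<in> C (Tr C g d j)"
    then have "Tr C x d (Suc j) \<le> x" using step(4)[of x] same by simp
    then have "Tr C x d (Suc j) = x" using step(2) by (rule antisym)
    then have "rho2 C x d \<le> Suc j" by (rule rho2_le)
    then show "rho2 C x d = Suc j" using less_rho2_follower[OF x] by simp
  next
    assume "rho2 C x d = Suc j"
    then have "Tr C x d (Suc j) = x" using Tr_rho2[OF C x0] by simp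
    then show "x \<in> C (Tr C g d j)" using step(1) same by simp
  qed
qed

lemma walk_followers_vanish: "\<exists>k. walk_followers C g d (Suc k) = {}"
proof (cases "ord_zero < g")
  case True
  obtain k where k: "Tr C g d k = g" using Tr_reaches[OF C True gd] by blast
  have "walk_followers C g d (Suc k) = {}"
  proof (rule equals0I)
    fix x assume "x \<in> walk_followers C g d (Suc k)"
    then have "g < Tr C g d k" by (rule less_Tr_if_follower)
    then show False using k by simp
  qed
  then show ?thesis by blast
next
  case False
  then have "walk_followers C g d 0 = {}" by auto
  then show ?thesis using walk_followers_antimono[of 0 "Suc 0" C g d] by blast
qed

end

text \<open>Since \<open>y \<in> C (Tr C g d j)\<close> is read off \<open>\<rho>\<^sub>2(y, d)\<close> for followers \<open>y\<close>, the followers and the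
  traces of the walk to \<open>g\<close> on them depend only on \<open>\<rho>\<^sub>2(\<cdot>, d)\<restriction>g\<close>.\<close>

context
  fixes C :: "'k::wellorder \<Rightarrow> 'k set" and g d d' :: 'k
  assumes C: "C_sequence C" and gd: "g \<le> d" and gd': "g \<le> d'"
    and rho2_eq: "\<forall>x<g. rho2 C x d' = rho2 C x d"
begin

lemma C_Tr_follower_agree:
  assumes "y \<in> walk_followers C g d j" "y \<in> walk_followers C g d' j"
  shows "y \<in> C (Tr C g d' j) \<longleftrightarrow> y \<in> C (Tr C g d j)"
  using follower_mem_C_Tr_iff[OF C gd assms(1)] follower_mem_C_Tr_iff[OF C gd' assms(2)]
    rho2_eq walk_followers_bounds[OF assms(1)] by simp

lemma walk_followers_agree: "walk_followers C g d' j = walk_followers C g d j"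
proof (induction j)
  case 0
  then show ?case by simp
next
  case (Suc j)
  have "(\<forall>y\<in>C (Tr C g d' j). y < x \<or> g \<le> y) \<longleftrightarrow> (\<forall>y\<in>C (Tr C g d j). y < x \<or> g \<le> y)"
    if x: "x \<in> walk_followers C g d j" for x
  proof -
    have "y \<in> C (Tr C g d' j) \<longleftrightarrow> y \<in> C (Tr C g d j)" if "x \<le> y" "y < g" for y
      using C_Tr_follower_agree walk_followers_upward[OF x that] Suc.IH by blast
    then show ?thesis by (meson not_le)
  qed
  then show ?case using Suc.IH by auto
qed

lemma Tr_exit_agree:
  assumes x: "x \<in> walk_followers C g d i" and exit: "x \<notin> walk_followers C g d (Suc i)"
  shows "Tr C x d' (Suc i) = Tr C x d (Suc i)"
proof -
  have x': "x \<in> walk_followers C g d' i" using x walk_followers_agree by simp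
  define P where "P C' = (\<lambda>z. z \<in> C' \<and> x \<le> z)" for C'
  have Suc_eq: "Tr C x d (Suc i) = Least (P (C (Tr C g d i)))"
    "Tr C x d' (Suc i) = Least (P (C (Tr C g d' i)))"
    using less_Tr_follower[OF C gd x] less_Tr_follower[OF C gd' x']
      Tr_follower[OF C gd x] Tr_follower[OF C gd' x'] by (simp_all add: P_def)
  obtain y where y: "P (C (Tr C g d i)) y" "y < g" using x exit by (auto simp: P_def not_less)
  let ?z = "Least (P (C (Tr C g d i)))"
  have z: "P (C (Tr C g d i)) ?z" using y(1) by (rule LeastI)
  have "?z < g" using Least_le[of "P (C (Tr C g d i))", OF y(1)] y(2) by simp
  have follower: "z \<in> walk_followers C g d i" if "x \<le> z" "z \<le> ?z" for z
    using walk_followers_upward[OF x that(1)] that(2) \<open>?z < g\<close> by simp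
  have "Least (P (C (Tr C g d' i))) = ?z"
  proof (rule Least_equality)
    show "P (C (Tr C g d' i)) ?z"
      using z C_Tr_follower_agree follower[of ?z] walk_followers_agree by (simp add: P_def)
  next
    fix z assume z': "P (C (Tr C g d' i)) z"
    show "?z \<le> z"
    proof (rule ccontr)
      assume "\<not> ?z \<le> z"
      then have "P (C (Tr C g d i)) z"
        using z' C_Tr_follower_agree follower[of z] walk_followers_agree by (simp add: P_def)
      then show False using Least_le \<open>\<not> ?z \<le> z\<close> by blast
    qed
  qed
  then show ?thesis using Suc_eq by simp
qed

lemma otp_trace_agree:
  assumes x: "x \<in> walk_followers C g d n" and z: "z \<in> walk_followers C g d n" "z \<le> x"
    and rho0_z: "rho0 C z d' = rho0 C z d"
  shows "otp (C (Tr C x d' n) \<inter> {..<x}) = otp (C (Tr C x d n) \<inter> {..<x})"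
proof -
  have z': "z \<in> walk_followers C g d' n" using z(1) walk_followers_agree by simp
  have x': "x \<in> walk_followers C g d' n" using x walk_followers_agree by simp
  have "n < rho2 C z d" "n < rho2 C z d'"
    using less_rho2_follower[OF C gd z(1)] less_rho2_follower[OF C gd' z'] by auto
  then have "otp (C (Tr C z d' n) \<inter> {..<z}) = otp (C (Tr C z d n) \<inter> {..<z})"
    using arg_cong[OF rho0_z, of "\<lambda>l. l ! n"] unfolding rho0_def by simp
  then have below_z: "otp (C (Tr C g d' n) \<inter> {..<z}) = otp (C (Tr C g d n) \<inter> {..<z})"
    using Tr_follower[OF C gd z(1)] Tr_follower[OF C gd' z'] by simp
  have "y \<in> walk_followers C g d n" if "y \<in> {z..<x}" for y
    using walk_followers_upward[OF z(1)] that walk_followers_bounds[OF x] by auto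
  then have from_z: "C (Tr C g d' n) \<inter> {z..<x} = C (Tr C g d n) \<inter> {z..<x}"
    using C_Tr_follower_agree walk_followers_agree by blast
  have split: "C t \<inter> {..<x} = (C t \<inter> {..<z}) \<union> (C t \<inter> {z..<x})" for t using z(2) by auto
  have "otp (C (Tr C g d' n) \<inter> {..<x}) = otp (C (Tr C g d n) \<inter> {..<x})"
    unfolding split from_z by (rule otp_Un_above[OF _ _ _ below_z]) auto
  then show ?thesis using Tr_follower[OF C gd x] Tr_follower[OF C gd' x'] by simp
qed

lemma rho0_eq_if_least_followers_agree:
  assumes x: "ord_zero < x" "x < g"
    and least: "\<And>j. walk_followers C g d j \<noteq> {} \<Longrightarrow>
      rho0 C (LEAST y. y \<in> walk_followers C g d j) d' = rho0 C (LEAST y. y \<in> walk_followers C g d j) d"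
  shows "rho0 C x d' = rho0 C x d"
proof -
  let ?F = "walk_followers C g d"
  obtain k where "?F (Suc k) = {}" using walk_followers_vanish[OF C gd] by blast
  then have "x \<notin> ?F (Suc k)" "\<not> x \<notin> ?F 0" using x by auto
  then obtain i where i: "\<forall>j\<le>i. x \<in> ?F j" "x \<notin> ?F (Suc i)"
    using ex_least_nat_less[of "\<lambda>j. x \<notin> ?F j"] by blast
  have late: "Tr C x d' n = Tr C x d n" if "Suc i \<le> n" for n
    using Tr_add_cong[OF Tr_exit_agree, of x i "n - Suc i"] i that by simp
  have early: "otp (C (Tr C x d' n) \<inter> {..<x}) = otp (C (Tr C x d n) \<inter> {..<x})" if "n \<le> i" for n
  proof -
    have x_n: "x \<in> ?F n" using i(1) that by blast
    then have "(LEAST y. y \<in> ?F n) \<in> ?F n" "(LEAST y. y \<in> ?F n) \<le> x" by (rule LeastI, rule Least_le)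
    then show ?thesis using otp_trace_agree[OF x_n] least x_n by blast
  qed
  have "otp (C (Tr C x d' n) \<inter> {..<x}) = otp (C (Tr C x d n) \<inter> {..<x})" for n
    using early late by (cases "n \<le> i") auto
  then show ?thesis unfolding rho0_def using rho2_eq x(2) by simp
qed

end

definition rho0_anchor :: "('k::wellorder \<Rightarrow> 'k set) \<Rightarrow> 'k \<Rightarrow> 'k \<Rightarrow> 'k \<Rightarrow> bool" where
  "rho0_anchor C g d e \<longleftrightarrow> e < g \<and>
     (\<forall>d'. g \<le> d' \<longrightarrow> (\<forall>x<g. rho2 C x d' = rho2 C x d) \<longrightarrow>
        (\<forall>x\<le>e. rho0 C x d' = rho0 C x d) \<longrightarrow> (\<forall>x<g. rho0 C x d' = rho0 C x d))"

lemma least_followers_bounded: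
  assumes C: "C_sequence C" and g: "ord_zero < g" and gd: "g \<le> d"
  shows "\<exists>e<g. \<forall>j. walk_followers C g d j \<noteq> {} \<longrightarrow> (LEAST y. y \<in> walk_followers C g d j) \<le> e"
proof -
  let ?F = "walk_followers C g d"
  obtain k where k: "?F (Suc k) = {}" using walk_followers_vanish[OF C gd] by blast
  define Z where "Z = insert ord_zero ((\<lambda>j. LEAST y. y \<in> ?F j) ` {j. j \<le> k \<and> ?F j \<noteq> {}})"
  have "finite Z" unfolding Z_def by simp
  have "Max Z < g"
  proof -
    have "(LEAST y. y \<in> ?F j) < g" if "?F j \<noteq> {}" for j
      using that LeastI[of "\<lambda>y. y \<in> ?F j"] walk_followers_bounds by blast
    then have "\<forall>z\<in>Z. z < g" using g unfolding Z_def by auto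
    moreover have "Z \<noteq> {}" unfolding Z_def by simp
    ultimately show ?thesis using Max_in[OF \<open>finite Z\<close>] by blast
  qed
  moreover have "(LEAST y. y \<in> ?F j) \<le> Max Z" if "?F j \<noteq> {}" for j
  proof -
    have "j \<le> k"
    proof (rule ccontr)
      assume "\<not> j \<le> k"
      then have "?F j \<subseteq> ?F (Suc k)" by (intro walk_followers_antimono) simp
      then show False using that k by blast
    qed
    then show ?thesis using that Max_ge[OF \<open>finite Z\<close>] unfolding Z_def by blast
  qed
  ultimately show ?thesis by blast
qed

lemma rho0_anchor_exists:
  assumes C: "C_sequence C" and g: "ord_zero < g" and gd: "g \<le> d"
  shows "\<exists>e. rho0_anchor C g d e"
proof -
  obtain e where "e < g"
    and e: "\<And>j. walk_followers C g d j \<noteq> {} \<Longrightarrow> (LEAST y. y \<in> walk_followers C g d j) \<le> e"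
    using least_followers_bounded[OF assms] by blast
  have "rho0_anchor C g d e" unfolding rho0_anchor_def
  proof (intro conjI allI impI)
    fix d' x
    assume d': "g \<le> d'" "\<forall>x<g. rho2 C x d' = rho2 C x d"
      and rho0_e: "\<forall>x\<le>e. rho0 C x d' = rho0 C x d" and "x < g"
    show "rho0 C x d' = rho0 C x d"
    proof (cases "x = ord_zero")
      case True
      then show ?thesis using rho0_e by simp
    next
      case False
      then show ?thesis
        using rho0_eq_if_least_followers_agree[OF C gd d' _ \<open>x < g\<close>] rho0_e e
        by (simp add: ord_zero_less_iff)
    qed
  qed fact
  then show ?thesis by blast
qed

section \<open>The trees \<open>T(c)\<close>\<close>

definition node_height :: "('k::wellorder \<rightharpoonup> 'v) \<Rightarrow> 'k" where
  "node_height t = (LEAST g. t g = None)"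

definition Tc_level :: "('k::wellorder \<Rightarrow> 'k \<Rightarrow> 'v) \<Rightarrow> 'k \<Rightarrow> ('k \<rightharpoonup> 'v) set" where
  "Tc_level c a = {fiber_restr c d a | d. a \<le> d}"

definition Tc_rep :: "('k::wellorder \<Rightarrow> 'k \<Rightarrow> 'v) \<Rightarrow> ('k \<rightharpoonup> 'v) \<Rightarrow> 'k" where
  "Tc_rep c t = (SOME d. node_height t \<le> d \<and> t = fiber_restr c d (node_height t))"

lemma node_height_fiber_restr [simp]: "node_height (fiber_restr c d g) = g"
  unfolding node_height_def fiber_restr_def by (rule Least_equality) (auto simp: not_less split: if_splits)

lemma fiber_restr_restrict: "fiber_restr c d g |` {..<b} = fiber_restr c d (min b g)"
  unfolding fiber_restr_def restrict_map_def by (auto intro!: ext)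

lemma fiber_restr_eq_iff:
  "fiber_restr c d g = fiber_restr c d' g' \<longleftrightarrow> g = g' \<and> (\<forall>x<g. c x d = c x d')"
proof
  assume eq: "fiber_restr c d g = fiber_restr c d' g'"
  then have "g = g'" by (metis node_height_fiber_restr)
  moreover have "c x d = c x d'" if "x < g" for x
    using fun_cong[OF eq, of x] that calculation by (simp add: fiber_restr_def)
  ultimately show "g = g' \<and> (\<forall>x<g. c x d = c x d')" by blast
next
  assume "g = g' \<and> (\<forall>x<g. c x d = c x d')"
  then show "fiber_restr c d g = fiber_restr c d' g'" unfolding fiber_restr_def by (auto intro!: ext)
qed

lemma Tc_iff: "t \<in> Tc c \<longleftrightarrow> (\<exists>g d. g \<le> d \<and> t = fiber_restr c d g)"
  unfolding Tc_def by blast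

lemma Tc_level_iff: "t \<in> Tc_level c a \<longleftrightarrow> t \<in> Tc c \<and> node_height t = a"
  unfolding Tc_level_def Tc_iff by auto

lemma Tc_level_ord_zero: "Tc_level c ord_zero = {Map.empty}"
  unfolding Tc_level_def fiber_restr_def by auto

lemma Tc_rep:
  assumes "t \<in> Tc c"
  shows "node_height t \<le> Tc_rep c t \<and> t = fiber_restr c (Tc_rep c t) (node_height t)"
proof -
  have "\<exists>d. node_height t \<le> d \<and> t = fiber_restr c d (node_height t)"
    using assms unfolding Tc_iff by auto
  then show ?thesis unfolding Tc_rep_def by (rule someI_ex)
qed

lemma Tc_restrict:
  assumes "t \<in> Tc c"
  shows "t |` {..<b} \<in> Tc c"
proof -
  obtain g d where gd: "g \<le> d" "t = fiber_restr c d g" using assms unfolding Tc_iff by blast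
  then have "min b g \<le> d" by (simp add: min.coboundedI2)
  then show ?thesis unfolding gd(2) fiber_restr_restrict Tc_iff by blast
qed

lemma node_height_restrict: "t \<in> Tc c \<Longrightarrow> node_height (t |` {..<b}) = min b (node_height t)"
  unfolding Tc_iff by (auto simp: fiber_restr_restrict)

lemma node_height_restrict_less: "t \<in> Tc c \<Longrightarrow> b < node_height t \<Longrightarrow> node_height (t |` {..<b}) = b"
  by (simp add: node_height_restrict min_absorb1)

lemma Tc_less_iff:
  assumes s: "s \<in> Tc c" and t: "t \<in> Tc c"
  shows "Tc_less s t \<longleftrightarrow> node_height s < node_height t \<and> s = t |` {..<node_height s}"
proof
  assume "Tc_less s t"
  then have le: "s \<subseteq>\<^sub>m t" and ne: "s \<noteq> t" unfolding Tc_less_def by auto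
  obtain g d where gd: "s = fiber_restr c d g" using s unfolding Tc_iff by blast
  obtain g' d' where gd': "t = fiber_restr c d' g'" using t unfolding Tc_iff by blast
  have agree: "x < g' \<and> c x d = c x d'" if "x < g" for x
  proof -
    have "s x = Some (c x d)" using that unfolding gd fiber_restr_def by simp
    then have "t x = Some (c x d)" using le unfolding map_le_def by (metis domI)
    then show ?thesis unfolding gd' fiber_restr_def by (auto split: if_splits)
  qed
  then have "g \<le> g'" using not_less by blast
  then have restr: "s = t |` {..<g}"
    unfolding gd gd' fiber_restr_restrict using agree by (simp add: fiber_restr_eq_iff min_absorb1)
  then have "g \<noteq> g'" using ne gd' by (auto simp: fiber_restr_restrict)
  moreover have "node_height s = g" "node_height t = g'" using gd gd' by simp_all
  ultimately show "node_height s < node_height t \<and> s = t |` {..<node_height s}"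
    using \<open>g \<le> g'\<close> restr by (simp add: order_le_less)
next
  assume "node_height s < node_height t \<and> s = t |` {..<node_height s}"
  moreover have "t |` {..<node_height s} \<subseteq>\<^sub>m t" by (auto simp: map_le_def)
  ultimately show "Tc_less s t" unfolding Tc_less_def by auto
qed

lemma Tc_less_restrict:
  assumes "t \<in> Tc c" "b < node_height t"
  shows "Tc_less (t |` {..<b}) t"
  using assms Tc_less_iff[OF Tc_restrict[OF assms(1)] assms(1)]
  by (simp add: node_height_restrict min_absorb1 restrict_restrict)

lemma Tc_nonminimal_iff:
  assumes "x \<in> Tc c"
  shows "(\<exists>y\<in>Tc c. Tc_less y x) \<longleftrightarrow> ord_zero < node_height x"
proof
  assume "\<exists>y\<in>Tc c. Tc_less y x"
  then show "ord_zero < node_height x" using Tc_less_iff assms order_le_less_trans ord_zero_le by metis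
next
  assume "ord_zero < node_height x"
  then show "\<exists>y\<in>Tc c. Tc_less y x" using Tc_less_restrict[OF assms] Tc_restrict[OF assms] by blast
qed

lemma Tc_less_restrict_iff:
  assumes t: "t \<in> Tc c" and b: "b < node_height t" "b' < node_height t"
  shows "Tc_less (t |` {..<b}) (t |` {..<b'}) \<longleftrightarrow> b < b'"
proof -
  have "{..<b'} \<inter> {..<b} = {..<b}" if "b < b'" using that by (auto dest: less_trans)
  then show ?thesis
    using Tc_less_iff[OF Tc_restrict[OF t] Tc_restrict[OF t], of b b'] node_height_restrict_less[OF t] b
    by (auto simp: restrict_restrict)
qed

lemma Tc_predecessors:
  assumes t: "t \<in> Tc c"
  shows "{y \<in> Tc c. Tc_less y t} = (\<lambda>b. t |` {..<b}) ` {..<node_height t}"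
proof
  show "{y \<in> Tc c. Tc_less y t} \<subseteq> (\<lambda>b. t |` {..<b}) ` {..<node_height t}"
    using Tc_less_iff[OF _ t] by blast
  show "(\<lambda>b. t |` {..<b}) ` {..<node_height t} \<subseteq> {y \<in> Tc c. Tc_less y t}"
    using Tc_less_restrict[OF t] Tc_restrict[OF t] by auto
qed

lemma node_height_Tc_predecessors:
  assumes t: "t \<in> Tc c"
  shows "node_height ` {y \<in> Tc c. Tc_less y t} = {..<node_height t}"
proof -
  have "(\<lambda>b. node_height (t |` {..<b})) ` {..<node_height t} = (\<lambda>b. b) ` {..<node_height t}"
    by (rule image_cong) (simp_all add: node_height_restrict_less[OF t])
  then show ?thesis unfolding Tc_predecessors[OF t] image_image by simp
qed

lemma height_is_Tc_iff:
  assumes t: "t \<in> Tc c"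
  shows "height_is (Tc c) Tc_less t a \<longleftrightarrow> a = node_height t"
proof
  assume "height_is (Tc c) Tc_less t a"
  then obtain f where f: "bij_betw f {..<a} {y \<in> Tc c. Tc_less y t}"
    "\<forall>x<a. \<forall>y<a. x < y \<longleftrightarrow> Tc_less (f x) (f y)"
    unfolding height_is_def by blast
  have mono: "strict_mono_on {..<a} (node_height \<circ> f)"
  proof (rule strict_mono_onI)
    fix x y assume "x \<in> {..<a}" "y \<in> {..<a}" "x < y"
    then have "Tc_less (f x) (f y)" "f x \<in> Tc c" "f y \<in> Tc c"
      using f by (auto simp: bij_betw_def)
    then show "(node_height \<circ> f) x < (node_height \<circ> f) y" using Tc_less_iff by auto
  qed
  have "(node_height \<circ> f) ` {..<a} = {..<node_height t}"
    using f(1) node_height_Tc_predecessors[OF t] unfolding bij_betw_def image_comp[symmetric] by simp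
  then have "bij_betw (node_height \<circ> f) {..<a} {..<node_height t}"
    using strict_mono_on_imp_inj_on[OF mono] unfolding bij_betw_def by blast
  then show "a = node_height t" using mono by (rule lessThan_iso_eq)
next
  assume a: "a = node_height t"
  let ?r = "\<lambda>b. t |` {..<b}"
  have "inj_on ?r {..<a}"
  proof (rule inj_onI)
    fix b b' assume b: "b \<in> {..<a}" "b' \<in> {..<a}" and eq: "?r b = ?r b'"
    have "b = node_height (?r b)" using node_height_restrict_less[OF t] b(1) a by simp
    also have "\<dots> = node_height (?r b')" by (simp only: eq)
    also have "\<dots> = b'" using node_height_restrict_less[OF t] b(2) a by simp
    finally show "b = b'" .
  qed
  then have "bij_betw ?r {..<a} {y \<in> Tc c. Tc_less y t}"
    unfolding Tc_predecessors[OF t] a bij_betw_def by blast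
  moreover have "\<forall>x<a. \<forall>y<a. x < y \<longleftrightarrow> Tc_less (?r x) (?r y)"
    using Tc_less_restrict_iff[OF t] a by simp
  ultimately show "height_is (Tc c) Tc_less t a" unfolding height_is_def by blast
qed

lemma kappa_tree_Tc_iff:
  "kappa_tree TYPE('k) (Tc (c::'k::wellorder \<Rightarrow> 'k \<Rightarrow> 'v)) Tc_less \<longleftrightarrow>
    (\<forall>a. kappa_small TYPE('k) (Tc_level c a))"
proof -
  have levels: "{x \<in> Tc c. height_is (Tc c) Tc_less x a} = Tc_level c a" for a
    using height_is_Tc_iff[of _ c a] by (auto simp: Tc_level_iff)
  have "\<forall>x\<in>Tc c. \<not> Tc_less x x" unfolding Tc_less_def by blast
  moreover have "\<forall>x\<in>Tc c. \<forall>y\<in>Tc c. \<forall>z\<in>Tc c. Tc_less x y \<longrightarrow> Tc_less y z \<longrightarrow> Tc_less x z"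
    unfolding Tc_less_def using map_le_antisym map_le_trans by metis
  moreover have "\<forall>x\<in>Tc c. \<exists>a::'k. height_is (Tc c) Tc_less x a"
    by (auto simp: height_is_Tc_iff)
  moreover have "Tc_level c a \<noteq> {}" for a
  proof -
    have "fiber_restr c a a \<in> Tc_level c a" unfolding Tc_level_def by blast
    then show ?thesis by blast
  qed
  ultimately show ?thesis unfolding kappa_tree_def levels kappa_small_def by blast
qed

lemma Tc_empty: "Map.empty \<in> Tc c"
  using Tc_level_ord_zero[of c] Tc_level_iff by blast

lemma Tc_height_ord_zero: "t \<in> Tc c \<Longrightarrow> node_height t = ord_zero \<Longrightarrow> t = Map.empty"
  using Tc_level_ord_zero[of c] Tc_level_iff by blast

section \<open>Special trees\<close>

definition regressive_on :: "'a set \<Rightarrow> ('a \<Rightarrow> 'a \<Rightarrow> bool) \<Rightarrow> ('a \<Rightarrow> 'a) \<Rightarrow> bool" where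
  "regressive_on T lt f \<longleftrightarrow> (\<forall>x\<in>T. f x \<in> T) \<and> (\<forall>x\<in>T. (\<exists>y\<in>T. lt y x) \<longrightarrow> lt (f x) x)"

definition small_antichain_cover ::
    "'k::wellorder itself \<Rightarrow> 'a set \<Rightarrow> ('a \<Rightarrow> 'a \<Rightarrow> bool) \<Rightarrow> 'a set \<Rightarrow> bool" where
  "small_antichain_cover K T lt X \<longleftrightarrow>
     (\<exists>\<A>. kappa_small K \<A> \<and> (\<forall>A\<in>\<A>. antichain_in T lt A) \<and> X \<subseteq> \<Union>\<A>)"

lemma special_kappa_tree_iff:
  "special_kappa_tree K T lt \<longleftrightarrow> kappa_tree K T lt \<and>
     (\<exists>f. regressive_on T lt f \<and> (\<forall>z\<in>T. small_antichain_cover K T lt {x \<in> T. f x = z}))"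
  unfolding special_kappa_tree_def regressive_on_def small_antichain_cover_def kappa_small_def
  by blast

lemma small_antichain_cover_subset:
  "small_antichain_cover K T lt X \<Longrightarrow> Y \<subseteq> X \<Longrightarrow> small_antichain_cover K T lt Y"
  unfolding small_antichain_cover_def by blast

lemma small_antichain_coverI:
  "kappa_small K \<A> \<Longrightarrow> (\<And>A. A \<in> \<A> \<Longrightarrow> antichain_in T lt A) \<Longrightarrow> X \<subseteq> \<Union>\<A> \<Longrightarrow>
    small_antichain_cover K T lt X"
  unfolding small_antichain_cover_def by blast

lemma small_antichain_cover_insert:
  assumes "regular_uncountable_cardinal K" "small_antichain_cover K T lt X" "x \<in> T" "\<not> lt x x"
  shows "small_antichain_cover K T lt (insert x X)"
proof -
  obtain \<A> where \<A>: "kappa_small K \<A>" "\<forall>A\<in>\<A>. antichain_in T lt A" "X \<subseteq> \<Union>\<A>"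
    using assms(2) unfolding small_antichain_cover_def by blast
  have "antichain_in T lt {x}" using assms(3,4) by (simp add: antichain_in_def)
  then show ?thesis
    by (intro small_antichain_coverI[of K "insert {x} \<A>"] kappa_small_insert assms(1) \<A>(1))
      (use \<A>(2,3) in auto)
qed

lemma small_antichain_cover_vimage:
  assumes cover: "small_antichain_cover K T lt X"
    and p: "\<And>x. x \<in> T' \<Longrightarrow> p x \<in> T"
    and mono: "\<And>x y. x \<in> T' \<Longrightarrow> y \<in> T' \<Longrightarrow> lt' x y \<Longrightarrow> lt (p x) (p y)"
  shows "small_antichain_cover K T' lt' {x \<in> T'. p x \<in> X}"
proof -
  obtain \<A> where \<A>: "kappa_small K \<A>" "\<forall>A\<in>\<A>. antichain_in T lt A" "X \<subseteq> \<Union>\<A>"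
    using cover unfolding small_antichain_cover_def by blast
  let ?\<B> = "(\<lambda>A. {x \<in> T'. p x \<in> A}) ` \<A>"
  have "kappa_small K ?\<B>" using kappa_small_image[OF \<A>(1)] .
  moreover have "antichain_in T' lt' B" if "B \<in> ?\<B>" for B
    using that \<A>(2) mono unfolding antichain_in_def by blast
  moreover have "{x \<in> T'. p x \<in> X} \<subseteq> \<Union>?\<B>" using \<A>(3) by blast
  ultimately show ?thesis by (rule small_antichain_coverI)
qed

lemma small_antichain_cover_by_key:
  assumes "kappa_small K Keys" "\<And>x. x \<in> X \<Longrightarrow> key x \<in> Keys"
    and "\<And>k. antichain_in T lt {x \<in> X. key x = k}"
  shows "small_antichain_cover K T lt X"
proof -
  let ?\<A> = "(\<lambda>k. {x \<in> X. key x = k}) ` Keys"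
  have "kappa_small K ?\<A>" using kappa_small_image[OF assms(1)] .
  moreover have "X \<subseteq> \<Union>?\<A>" using assms(2) by blast
  ultimately show ?thesis using assms(3) by (intro small_antichain_coverI) auto
qed

section \<open>Coding \<open>T(\<rho>\<^sub>0)\<close> over \<open>T(\<rho>\<^sub>2)\<close>\<close>

definition node_lengths :: "('k \<rightharpoonup> 'a list) \<Rightarrow> ('k \<rightharpoonup> nat)" where
  "node_lengths t = map_option length \<circ> t"

lemma length_rho0: "length (rho0 C b g) = rho2 C b g"
  unfolding rho0_def by simp

lemma node_lengths_fiber_restr: "node_lengths (fiber_restr (rho0 C) d g) = fiber_restr (rho2 C) d g"
  unfolding node_lengths_def fiber_restr_def by (auto simp: length_rho0)

lemma node_lengths_restrict: "node_lengths (t |` A) = node_lengths t |` A"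
  unfolding node_lengths_def restrict_map_def by auto

lemma node_height_node_lengths: "node_height (node_lengths t) = node_height t"
  unfolding node_height_def node_lengths_def by simp

lemma node_lengths_in_Tc: "t \<in> Tc (rho0 C) \<Longrightarrow> node_lengths t \<in> Tc (rho2 C)"
  unfolding Tc_iff by (metis node_lengths_fiber_restr)

lemma node_lengths_less:
  assumes "s \<in> Tc (rho0 C)" "t \<in> Tc (rho0 C)" "Tc_less s t"
  shows "Tc_less (node_lengths s) (node_lengths t)"
proof -
  have "node_height s < node_height t" "s = t |` {..<node_height s}"
    using assms Tc_less_iff by blast+
  then show ?thesis
    using Tc_less_iff[OF node_lengths_in_Tc[OF assms(1)] node_lengths_in_Tc[OF assms(2)]]
    by (metis node_height_node_lengths node_lengths_restrict)
qed

lemma Tc_level_rho2: "Tc_level (rho2 C) a = node_lengths ` Tc_level (rho0 C) a"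
proof (intro equalityI subsetI)
  fix t assume "t \<in> Tc_level (rho2 C) a"
  then obtain d where "a \<le> d" "t = node_lengths (fiber_restr (rho0 C) d a)"
    unfolding Tc_level_def by (auto simp: node_lengths_fiber_restr)
  then show "t \<in> node_lengths ` Tc_level (rho0 C) a" unfolding Tc_level_def by blast
qed (auto simp: Tc_level_def node_lengths_fiber_restr)

lemma rho0_bounded: "set (rho0 C e d) \<subseteq> {..e}"
  unfolding rho0_def using otp_iso[of "C _ \<inter> {..<e}" e] by auto

definition rho0_anchor_of :: "('k::wellorder \<Rightarrow> 'k set) \<Rightarrow> 'k \<Rightarrow> 'k \<Rightarrow> 'k" where
  "rho0_anchor_of C g d = (SOME e. rho0_anchor C g d e)"

text \<open>What has to be remembered of \<open>\<rho>\<^sub>0(\<cdot>, d)\<restriction>g\<close> besides \<open>\<rho>\<^sub>2(\<cdot>, d)\<restriction>g\<close>: a node of lower level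
  and one finite sequence of ordinals below \<open>g\<close>.\<close>

definition rho0_code :: "('k::wellorder \<Rightarrow> 'k set) \<Rightarrow> 'k \<Rightarrow> 'k \<Rightarrow> ('k \<rightharpoonup> 'k list) \<times> 'k list" where
  "rho0_code C g d =
     (fiber_restr (rho0 C) d (rho0_anchor_of C g d), rho0 C (rho0_anchor_of C g d) d)"

context
  fixes C :: "'k::wellorder \<Rightarrow> 'k set"
  assumes C: "C_sequence C"
begin

lemma rho0_anchor_of:
  "ord_zero < g \<Longrightarrow> g \<le> d \<Longrightarrow> rho0_anchor C g d (rho0_anchor_of C g d)"
  unfolding rho0_anchor_of_def using rho0_anchor_exists[OF C] by (rule someI_ex)

lemma rho0_anchor_of_less: "ord_zero < g \<Longrightarrow> g \<le> d \<Longrightarrow> rho0_anchor_of C g d < g"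
  using rho0_anchor_of unfolding rho0_anchor_def by blast

lemma rho0_code_mem:
  assumes "ord_zero < g" "g \<le> d"
  shows "rho0_code C g d \<in> Tc_level (rho0 C) (rho0_anchor_of C g d) \<times> lists {..rho0_anchor_of C g d}"
  using rho0_anchor_of_less[OF assms] assms(2) rho0_bounded
  unfolding rho0_code_def Tc_level_def by auto

lemma rho0_code_determines:
  assumes g: "ord_zero < g" "g \<le> d" "g \<le> d'"
    and rho2_eq: "fiber_restr (rho2 C) d' g = fiber_restr (rho2 C) d g"
    and code_eq: "rho0_code C g' d' = rho0_code C g d"
  shows "fiber_restr (rho0 C) d' g = fiber_restr (rho0 C) d g"
proof -
  let ?e = "rho0_anchor_of C g d" and ?e' = "rho0_anchor_of C g' d'"
  have "fiber_restr (rho0 C) d' ?e' = fiber_restr (rho0 C) d ?e" "rho0 C ?e' d' = rho0 C ?e d"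
    using code_eq unfolding rho0_code_def by simp_all
  then have "?e' = ?e" "\<forall>x<?e. rho0 C x d' = rho0 C x d" "rho0 C ?e d' = rho0 C ?e d"
    unfolding fiber_restr_eq_iff by auto
  then have "\<forall>x\<le>?e. rho0 C x d' = rho0 C x d" by (auto simp: order_le_less)
  moreover have "\<forall>x<g. rho2 C x d' = rho2 C x d" using rho2_eq by (simp add: fiber_restr_eq_iff)
  ultimately show ?thesis
    using rho0_anchor_of[OF g(1,2)] g(3) unfolding rho0_anchor_def fiber_restr_eq_iff by blast
qed

end

lemma Tc_level_rho0_coding:
  fixes C :: "'k::wellorder \<Rightarrow> 'k set"
  assumes C: "C_sequence C" and a: "ord_zero < a"
  defines "code x \<equiv> (node_lengths x, rho0_code C a (Tc_rep (rho0 C) x))"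
  shows "inj_on code (Tc_level (rho0 C) a)"
    and "code ` Tc_level (rho0 C) a \<subseteq>
      Tc_level (rho2 C) a \<times> (\<Union>b\<in>{..<a}. Tc_level (rho0 C) b \<times> lists {..b})"
proof -
  let ?d = "Tc_rep (rho0 C)"
  have rep: "a \<le> ?d x \<and> x = fiber_restr (rho0 C) (?d x) a" if "x \<in> Tc_level (rho0 C) a" for x
    using Tc_rep[of x "rho0 C"] that by (auto simp: Tc_level_iff)
  show "inj_on code (Tc_level (rho0 C) a)"
  proof (rule inj_onI)
    fix x y assume x: "x \<in> Tc_level (rho0 C) a" and y: "y \<in> Tc_level (rho0 C) a"
      and eq: "code x = code y"
    have "fiber_restr (rho2 C) (?d y) a = fiber_restr (rho2 C) (?d x) a"
      using eq rep[OF x] rep[OF y] unfolding code_def by (metis node_lengths_fiber_restr prod.inject)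
    moreover have "rho0_code C a (?d y) = rho0_code C a (?d x)" using eq unfolding code_def by simp
    ultimately have "fiber_restr (rho0 C) (?d y) a = fiber_restr (rho0 C) (?d x) a"
      using rho0_code_determines[OF C a] rep[OF x] rep[OF y] by blast
    then show "x = y" using rep[OF x] rep[OF y] by simp
  qed
  show "code ` Tc_level (rho0 C) a \<subseteq>
      Tc_level (rho2 C) a \<times> (\<Union>b\<in>{..<a}. Tc_level (rho0 C) b \<times> lists {..b})"
  proof
    fix p assume "p \<in> code ` Tc_level (rho0 C) a"
    then obtain x where x: "x \<in> Tc_level (rho0 C) a" and p: "p = code x" by blast
    have "node_lengths x \<in> Tc_level (rho2 C) a" using x Tc_level_rho2 by blast
    moreover have "rho0_anchor_of C a (?d x) \<in> {..<a}"
      using rho0_anchor_of_less[OF C a] rep[OF x] by blast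
    ultimately show "p \<in> Tc_level (rho2 C) a \<times> (\<Union>b\<in>{..<a}. Tc_level (rho0 C) b \<times> lists {..b})"
      using rho0_code_mem[OF C a] rep[OF x] unfolding p code_def by blast
  qed
qed

lemma kappa_small_Tc_level_rho0:
  fixes C :: "'k::wellorder \<Rightarrow> 'k set"
  assumes R: "regular_uncountable_cardinal TYPE('k)" and C: "C_sequence C"
    and small2: "\<And>a. kappa_small TYPE('k) (Tc_level (rho2 C) a)"
  shows "kappa_small TYPE('k) (Tc_level (rho0 C) a)"
proof (induction a rule: less_induct)
  case (less a)
  show ?case
  proof (cases "a = ord_zero")
    case True
    then show ?thesis by (simp add: Tc_level_ord_zero kappa_small_countable[OF R])
  next
    case False
    then have a: "ord_zero < a" by (simp add: ord_zero_less_iff)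
    have "kappa_small TYPE('k) (Tc_level (rho2 C) a \<times> (\<Union>b\<in>{..<a}. Tc_level (rho0 C) b \<times> lists {..b}))"
      by (intro kappa_small_Times[OF R] small2 kappa_small_UN[OF R] kappa_small_lessThan[OF R]
          kappa_small_lists[OF R] kappa_small_atMost[OF R] less.IH) auto
    then show ?thesis using kappa_small_inj_on Tc_level_rho0_coding[OF C a] by blast
  qed
qed

section \<open>Transferring specializing maps\<close>

definition pulled_regressor ::
    "(('k::wellorder \<rightharpoonup> nat) \<Rightarrow> ('k \<rightharpoonup> nat)) \<Rightarrow> ('k \<rightharpoonup> 'a list) \<Rightarrow> ('k \<rightharpoonup> 'a list)"
  where "pulled_regressor f t = t |` {..<node_height (f (node_lengths t))}"

context
  fixes C :: "'k::wellorder \<Rightarrow> 'k set" and f :: "('k \<rightharpoonup> nat) \<Rightarrow> ('k \<rightharpoonup> nat)"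
  assumes f: "regressive_on (Tc (rho2 C)) Tc_less f"
begin

lemma pulled_regressor_less:
  assumes x: "x \<in> Tc (rho0 C)" "ord_zero < node_height x"
  shows "Tc_less (pulled_regressor f x) x \<and> node_lengths (pulled_regressor f x) = f (node_lengths x)"
proof -
  have x2: "node_lengths x \<in> Tc (rho2 C)" "ord_zero < node_height (node_lengths x)"
    using node_lengths_in_Tc[OF x(1)] x(2) by (simp_all only: node_height_node_lengths)
  then have "Tc_less (f (node_lengths x)) (node_lengths x)" "f (node_lengths x) \<in> Tc (rho2 C)"
    using f Tc_nonminimal_iff unfolding regressive_on_def by blast+
  then have "node_height (f (node_lengths x)) < node_height x"
    "f (node_lengths x) = node_lengths x |` {..<node_height (f (node_lengths x))}"
    using Tc_less_iff[OF _ x2(1)] node_height_node_lengths by metis+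
  then show ?thesis
    using Tc_less_restrict[OF x(1)] unfolding pulled_regressor_def by (simp add: node_lengths_restrict)
qed

lemma regressive_on_pulled_regressor: "regressive_on (Tc (rho0 C)) Tc_less (pulled_regressor f)"
  unfolding regressive_on_def using Tc_restrict pulled_regressor_less Tc_nonminimal_iff
  unfolding pulled_regressor_def by blast

lemma pulled_regressor_fiber:
  "{x \<in> Tc (rho0 C). pulled_regressor f x = z} \<subseteq>
    insert Map.empty {x \<in> Tc (rho0 C). node_lengths x \<in> {y \<in> Tc (rho2 C). f y = node_lengths z}}"
  using pulled_regressor_less Tc_height_ord_zero node_lengths_in_Tc
  by (fastforce simp: ord_zero_less_iff)

end

lemma special_rho0_if_special_rho2:
  fixes C :: "'k::wellorder \<Rightarrow> 'k set"
  assumes R: "regular_uncountable_cardinal TYPE('k)" and C: "C_sequence C"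
    and special2: "special_kappa_tree TYPE('k) (Tc (rho2 C)) Tc_less"
  shows "special_kappa_tree TYPE('k) (Tc (rho0 C)) Tc_less"
proof -
  let ?T0 = "Tc (rho0 C)" and ?T2 = "Tc (rho2 C)"
  obtain f where kt2: "kappa_tree TYPE('k) ?T2 Tc_less" and f: "regressive_on ?T2 Tc_less f"
    and cover2: "\<And>z. z \<in> ?T2 \<Longrightarrow> small_antichain_cover TYPE('k) ?T2 Tc_less {x \<in> ?T2. f x = z}"
    using special2 unfolding special_kappa_tree_iff by blast
  have "small_antichain_cover TYPE('k) ?T0 Tc_less {x \<in> ?T0. pulled_regressor f x = z}"
    if z: "z \<in> ?T0" for z
  proof -
    let ?X = "{x \<in> ?T0. node_lengths x \<in> {y \<in> ?T2. f y = node_lengths z}}"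
    have "small_antichain_cover TYPE('k) ?T0 Tc_less ?X"
      by (rule small_antichain_cover_vimage[OF cover2[OF node_lengths_in_Tc[OF z]]])
        (simp_all add: node_lengths_in_Tc node_lengths_less)
    then have "small_antichain_cover TYPE('k) ?T0 Tc_less (insert Map.empty ?X)"
      by (rule small_antichain_cover_insert[OF R]) (auto simp: Tc_empty Tc_less_def)
    then show ?thesis using pulled_regressor_fiber[OF f] by (rule small_antichain_cover_subset)
  qed
  moreover have "kappa_tree TYPE('k) ?T0 Tc_less"
    using kt2 kappa_small_Tc_level_rho0[OF R C] unfolding kappa_tree_Tc_iff by blast
  ultimately show ?thesis
    unfolding special_kappa_tree_iff using regressive_on_pulled_regressor[OF f] by blast
qed

definition rho0_lift :: "('k::wellorder \<Rightarrow> 'k set) \<Rightarrow> ('k \<rightharpoonup> nat) \<Rightarrow> ('k \<rightharpoonup> 'k list)" where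
  "rho0_lift C s = fiber_restr (rho0 C) (Tc_rep (rho2 C) s) (node_height s)"

lemma rho0_lift_in_Tc: "s \<in> Tc (rho2 C) \<Longrightarrow> rho0_lift C s \<in> Tc (rho0 C)"
  using Tc_rep[of s "rho2 C"] unfolding rho0_lift_def Tc_iff by blast

lemma node_height_rho0_lift [simp]: "node_height (rho0_lift C s) = node_height s"
  unfolding rho0_lift_def by simp

lemma rho0_lift_less:
  assumes C: "C_sequence C" and s: "s \<in> Tc (rho2 C)" "s' \<in> Tc (rho2 C)" "Tc_less s s'"
    and pos: "ord_zero < node_height s"
    and code_eq: "rho0_code C (node_height s') (Tc_rep (rho2 C) s') =
      rho0_code C (node_height s) (Tc_rep (rho2 C) s)"
  shows "Tc_less (rho0_lift C s) (rho0_lift C s')"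
proof -
  let ?g = "node_height s" and ?d = "Tc_rep (rho2 C) s" and ?d' = "Tc_rep (rho2 C) s'"
  have lt: "?g < node_height s'" "s = s' |` {..<?g}" using Tc_less_iff s by blast+
  have rep: "?g \<le> ?d" "s = fiber_restr (rho2 C) ?d ?g" using Tc_rep[OF s(1)] by auto
  have rep': "node_height s' \<le> ?d'" "s' = fiber_restr (rho2 C) ?d' (node_height s')"
    using Tc_rep[OF s(2)] by auto
  have "fiber_restr (rho2 C) ?d' ?g = fiber_restr (rho2 C) ?d ?g"
    using lt rep rep'(2) by (metis fiber_restr_restrict less_imp_le min_absorb1)
  moreover have "?g \<le> ?d'" using lt(1) rep'(1) by simp
  ultimately have "fiber_restr (rho0 C) ?d' ?g = fiber_restr (rho0 C) ?d ?g"
    using rho0_code_determines[OF C pos rep(1) _ _ code_eq] by blast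
  then have "rho0_lift C s = rho0_lift C s' |` {..<node_height (rho0_lift C s)}"
    unfolding rho0_lift_def fiber_restr_restrict using lt(1) by (simp add: min_absorb1)
  moreover have "node_height (rho0_lift C s) < node_height (rho0_lift C s')" using lt(1) by simp
  ultimately show ?thesis
    using Tc_less_iff[OF rho0_lift_in_Tc[OF s(1)] rho0_lift_in_Tc[OF s(2)]] by blast
qed

text \<open>Cutting no lower than the anchor keeps the code of the lift at levels below the image, so
  that within a fibre it ranges over a small set.\<close>

definition lifted_regressor ::
    "('k::wellorder \<Rightarrow> 'k set) \<Rightarrow> (('k \<rightharpoonup> 'k list) \<Rightarrow> ('k \<rightharpoonup> 'k list)) \<Rightarrow> ('k \<rightharpoonup> nat) \<Rightarrow> ('k \<rightharpoonup> nat)"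
  where "lifted_regressor C f s = s |` {..<max (node_height (f (rho0_lift C s)))
      (rho0_anchor_of C (node_height s) (Tc_rep (rho2 C) s))}"

context
  fixes C :: "'k::wellorder \<Rightarrow> 'k set" and f :: "('k \<rightharpoonup> 'k list) \<Rightarrow> ('k \<rightharpoonup> 'k list)"
  assumes C: "C_sequence C" and f: "regressive_on (Tc (rho0 C)) Tc_less f"
begin

lemma lifted_regressor_less:
  assumes s: "s \<in> Tc (rho2 C)" "ord_zero < node_height s"
  shows "Tc_less (lifted_regressor C f s) s"
    "node_height (lifted_regressor C f s) = max (node_height (f (rho0_lift C s)))
       (rho0_anchor_of C (node_height s) (Tc_rep (rho2 C) s))"
proof -
  have lift: "rho0_lift C s \<in> Tc (rho0 C)" "\<exists>y\<in>Tc (rho0 C). Tc_less y (rho0_lift C s)"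
    using rho0_lift_in_Tc[OF s(1)] Tc_nonminimal_iff[of "rho0_lift C s"] s(2) by auto
  then have "Tc_less (f (rho0_lift C s)) (rho0_lift C s)" "f (rho0_lift C s) \<in> Tc (rho0 C)"
    using f unfolding regressive_on_def by blast+
  then have "node_height (f (rho0_lift C s)) < node_height s"
    using Tc_less_iff rho0_lift_in_Tc[OF s(1)] by fastforce
  moreover have "rho0_anchor_of C (node_height s) (Tc_rep (rho2 C) s) < node_height s"
    using rho0_anchor_of_less[OF C s(2)] Tc_rep[OF s(1)] by blast
  ultimately show "Tc_less (lifted_regressor C f s) s"
    "node_height (lifted_regressor C f s) = max (node_height (f (rho0_lift C s)))
       (rho0_anchor_of C (node_height s) (Tc_rep (rho2 C) s))"
    unfolding lifted_regressor_def using Tc_less_restrict[OF s(1)] node_height_restrict[OF s(1)]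
    by (simp_all add: min_absorb1)
qed

lemma regressive_on_lifted_regressor: "regressive_on (Tc (rho2 C)) Tc_less (lifted_regressor C f)"
  unfolding regressive_on_def using Tc_restrict lifted_regressor_less(1) Tc_nonminimal_iff
  unfolding lifted_regressor_def by blast

lemma lifted_regressor_records:
  assumes s: "s \<in> Tc (rho2 C)" "ord_zero < node_height s" and w: "lifted_regressor C f s = w"
  shows "f (rho0_lift C s) \<in> (\<Union>b\<in>{..node_height w}. Tc_level (rho0 C) b)"
    and "rho0_code C (node_height s) (Tc_rep (rho2 C) s) \<in>
      (\<Union>b\<in>{..node_height w}. Tc_level (rho0 C) b \<times> lists {..b})"
proof -
  let ?e = "rho0_anchor_of C (node_height s) (Tc_rep (rho2 C) s)"
  have hw: "node_height w = max (node_height (f (rho0_lift C s))) ?e"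
    using lifted_regressor_less(2)[OF s] w by simp
  have "f (rho0_lift C s) \<in> Tc (rho0 C)"
    using f rho0_lift_in_Tc[OF s(1)] unfolding regressive_on_def by blast
  then show "f (rho0_lift C s) \<in> (\<Union>b\<in>{..node_height w}. Tc_level (rho0 C) b)"
    using hw by (auto simp: Tc_level_iff)
  show "rho0_code C (node_height s) (Tc_rep (rho2 C) s) \<in>
      (\<Union>b\<in>{..node_height w}. Tc_level (rho0 C) b \<times> lists {..b})"
  proof (rule UN_I[of ?e])
    show "rho0_code C (node_height s) (Tc_rep (rho2 C) s) \<in> Tc_level (rho0 C) ?e \<times> lists {..?e}"
      using rho0_code_mem[OF C s(2)] Tc_rep[OF s(1)] by blast
  qed (simp add: hw)
qed

end

lemma lifted_regressor_fiber_cover: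
  fixes C :: "'k::wellorder \<Rightarrow> 'k set" and f :: "('k \<rightharpoonup> 'k list) \<Rightarrow> ('k \<rightharpoonup> 'k list)"
  assumes R: "regular_uncountable_cardinal TYPE('k)" and C: "C_sequence C"
    and f: "regressive_on (Tc (rho0 C)) Tc_less f"
    and small0: "\<And>a. kappa_small TYPE('k) (Tc_level (rho0 C) a)"
    and AA: "\<And>z. z \<in> Tc (rho0 C) \<Longrightarrow> kappa_small TYPE('k) (AA z) \<and>
      (\<forall>A\<in>AA z. antichain_in (Tc (rho0 C)) Tc_less A) \<and> {x \<in> Tc (rho0 C). f x = z} \<subseteq> \<Union>(AA z)"
  shows "small_antichain_cover TYPE('k) (Tc (rho2 C)) Tc_less {s \<in> Tc (rho2 C). lifted_regressor C f s = w}"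
proof -
  let ?T0 = "Tc (rho0 C)" and ?T2 = "Tc (rho2 C)" and ?lift = "rho0_lift C"
  define cell where "cell s = (SOME A. A \<in> AA (f (?lift s)) \<and> ?lift s \<in> A)" for s
  \<comment> \<open>comparable nodes with equal keys would have comparable lifts in one antichain \<open>cell s\<close>\<close>
  define key where "key s = (f (?lift s), cell s, rho0_code C (node_height s) (Tc_rep (rho2 C) s))"
    for s
  let ?X = "{s \<in> ?T2. ord_zero < node_height s \<and> lifted_regressor C f s = w}"
  let ?U = "\<Union>b\<in>{..node_height w}. Tc_level (rho0 C) b"
  let ?Keys = "?U \<times> (\<Union>z\<in>?U. AA z) \<times> (\<Union>b\<in>{..node_height w}. Tc_level (rho0 C) b \<times> lists {..b})"
  have f_lift: "f (?lift s) \<in> ?T0" if "s \<in> ?T2" for s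
    using f rho0_lift_in_Tc[OF that] unfolding regressive_on_def by blast
  have cell: "cell s \<in> AA (f (?lift s)) \<and> ?lift s \<in> cell s" if "s \<in> ?T2" for s
  proof -
    have "\<exists>A. A \<in> AA (f (?lift s)) \<and> ?lift s \<in> A"
      using AA[OF f_lift[OF that]] rho0_lift_in_Tc[OF that] by blast
    then show ?thesis unfolding cell_def by (rule someI_ex)
  qed
  have "kappa_small TYPE('k) ?Keys"
    by (intro kappa_small_Times[OF R] kappa_small_UN[OF R] kappa_small_atMost[OF R] small0
        kappa_small_lists[OF R]) (auto simp: AA Tc_level_iff)
  moreover have "key s \<in> ?Keys" if s: "s \<in> ?X" for s
    using lifted_regressor_records[OF C f, of s w] cell[of s] s unfolding key_def by blast
  moreover have "antichain_in ?T2 Tc_less {s \<in> ?X. key s = k}" for k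
    unfolding antichain_in_def
  proof (intro conjI ballI notI)
    fix s s' assume s: "s \<in> {s \<in> ?X. key s = k}" and s': "s' \<in> {s \<in> ?X. key s = k}"
      and "Tc_less s s'"
    then have "Tc_less (?lift s) (?lift s')" using rho0_lift_less[OF C] unfolding key_def by auto
    moreover have "?lift s \<in> cell s" "?lift s' \<in> cell s" "cell s \<in> AA (f (?lift s))"
      using cell s s' unfolding key_def by auto
    ultimately show False
      using AA[OF f_lift] s unfolding antichain_in_def by blast
  qed auto
  ultimately have "small_antichain_cover TYPE('k) ?T2 Tc_less ?X"
    by (rule small_antichain_cover_by_key)
  then have "small_antichain_cover TYPE('k) ?T2 Tc_less (insert Map.empty ?X)"
    by (rule small_antichain_cover_insert[OF R]) (auto simp: Tc_empty Tc_less_def)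
  moreover have "{s \<in> ?T2. lifted_regressor C f s = w} \<subseteq> insert Map.empty ?X"
    using Tc_height_ord_zero by (fastforce simp: ord_zero_less_iff)
  ultimately show ?thesis by (rule small_antichain_cover_subset)
qed

lemma special_rho2_if_special_rho0:
  fixes C :: "'k::wellorder \<Rightarrow> 'k set"
  assumes R: "regular_uncountable_cardinal TYPE('k)" and C: "C_sequence C"
    and special0: "special_kappa_tree TYPE('k) (Tc (rho0 C)) Tc_less"
  shows "special_kappa_tree TYPE('k) (Tc (rho2 C)) Tc_less"
proof -
  obtain f where kt0: "kappa_tree TYPE('k) (Tc (rho0 C)) Tc_less"
    and f: "regressive_on (Tc (rho0 C)) Tc_less f"
    and cover0: "\<forall>z\<in>Tc (rho0 C).
      small_antichain_cover TYPE('k) (Tc (rho0 C)) Tc_less {x \<in> Tc (rho0 C). f x = z}"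
    using special0 unfolding special_kappa_tree_iff by blast
  obtain AA where AA: "\<And>z. z \<in> Tc (rho0 C) \<Longrightarrow> kappa_small TYPE('k) (AA z) \<and>
      (\<forall>A\<in>AA z. antichain_in (Tc (rho0 C)) Tc_less A) \<and> {x \<in> Tc (rho0 C). f x = z} \<subseteq> \<Union>(AA z)"
    using bchoice[OF cover0[unfolded small_antichain_cover_def]] by blast
  have small0: "kappa_small TYPE('k) (Tc_level (rho0 C) a)" for a
    using kt0 kappa_tree_Tc_iff by blast
  have "kappa_tree TYPE('k) (Tc (rho2 C)) Tc_less"
    unfolding kappa_tree_Tc_iff Tc_level_rho2 using small0 kappa_small_image by blast
  then show ?thesis unfolding special_kappa_tree_iff
    using regressive_on_lifted_regressor[OF C f] lifted_regressor_fiber_cover[OF R C f small0 AA]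
    by blast

qed

theorem lemma5p3:
  fixes C :: "'k::wellorder \<Rightarrow> 'k set"
  assumes "regular_uncountable_cardinal TYPE('k)"
      and "C_sequence C"
  shows "special_kappa_tree TYPE('k) (Tc (rho0 C)) Tc_less
     \<longleftrightarrow> special_kappa_tree TYPE('k) (Tc (rho2 C)) Tc_less"
  using special_rho2_if_special_rho0[OF assms] special_rho0_if_special_rho2[OF assms] by blast

end
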